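(* Let $X$ be an infinite-dimensional Banach space over $\mathbb{K}\in\{\mathbb{R},\mathbb{C}\}$, let $\varepsilon>0$, $n\in\mathbb{N}$, and $\varphi_1,\dots,\varphi_n\in X^*\setminus\{0\}$, and put $A=\{x\in X: |\varphi_i(x)|<\varepsilon\text{ for all }i=1,\dots,n\}$. Then: (i) $\dim\big(\bigcap_{i=1}^n\ker\varphi_i\big)=\dim X$, and every linear subspace $W\subset A$ with $\dim W<\dim X$ satisfies $W\subset\bigcap_{i=1}^n\ker\varphi_i$; consequently, for every cardinal $\alpha<\dim X$, $A$ is $(\alpha,\dim X)$-spaceable (with respect to the norm topology). (ii) There exists $x\in A$ such that no linear subspace $W$ of $X$ satisfies $x\in W\subset A\cup\{0\}$; in particular $A$ is not pointwise lineable (hence not pointwise spaceable).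
   Context: $X^*$ denotes the topological dual of $X$; $\dim$ denotes algebraic (Hamel) dimension. For a vector space $V$ and a cardinal $\alpha$, a subset $A\subset V$ is $\alpha$-lineable if $A\cup\{0\}$ contains a linear subspace of dimension $\alpha$. For cardinals $\alpha<\beta\le\dim V$, $A$ is $(\alpha,\beta)$-spaceable if $A$ is $\alpha$-lineable and for every linear subspace $W_\alpha\subset A\cup\{0\}$ with $\dim W_\alpha=\alpha$ there is a closed linear subspace $W_\beta$ with $\dim W_\beta=\beta$ and $W_\alpha\subset W_\beta\subset A\cup\{0\}$. $A$ is pointwise lineable if for each $x\in A$ there is an infinite-dimensional linear subspace $W_x$ with $x\in W_x\subset A\cup\{0\}$; pointwise spaceable is the same with $W_x$ required to be closed. *)

theory Defs
  imports "HOL-Analysis.Analysis"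
begin

text \<open>A Banach space over a scalar field 'k (which is isometrically isomorphic to R or C):
  the carrier type 'a is a (real) Banach space, and smult_K is a 'k-vector space
  structure on 'a that extends real scalar multiplication and is compatible with the norm.\<close>
definition K_banach :: "('k::real_normed_field \<Rightarrow> 'a::banach \<Rightarrow> 'a) \<Rightarrow> bool" where
  "K_banach smult_K \<longleftrightarrow> vector_space smult_K
     \<and> (\<forall>r x. smult_K (of_real r) x = r *\<^sub>R x)
     \<and> (\<forall>c x. norm (smult_K c x) = norm c * norm x)"

definition hamel_basis :: "('k::field \<Rightarrow> 'a::ab_group_add \<Rightarrow> 'a) \<Rightarrow> 'a set \<Rightarrow> 'a set \<Rightarrow> bool" where
  "hamel_basis smult_K V B \<longleftrightarrow> B \<subseteq> V \<and> \<not> module.dependent smult_K B \<and> module.span smult_K B = V"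

definition hdim :: "('k::field \<Rightarrow> 'a::ab_group_add \<Rightarrow> 'a) \<Rightarrow> 'a set \<Rightarrow> 'a rel" where
  "hdim smult_K V = card_of (SOME B. hamel_basis smult_K V B)"

definition lineable :: "('k::field \<Rightarrow> 'a::ab_group_add \<Rightarrow> 'a) \<Rightarrow> 'a set \<Rightarrow> 'c rel \<Rightarrow> bool" where
  "lineable smult_K A \<alpha> \<longleftrightarrow>
     (\<exists>W. module.subspace smult_K W \<and> W \<subseteq> A \<union> {0} \<and> (hdim smult_K W, \<alpha>) \<in> ordIso)"

definition spaceable :: "('k::field \<Rightarrow> 'a::{ab_group_add,topological_space} \<Rightarrow> 'a) \<Rightarrow> 'a set \<Rightarrow> 'c rel \<Rightarrow> 'd rel \<Rightarrow> bool" where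
  "spaceable smult_K A \<alpha> \<beta> \<longleftrightarrow>
     Card_order \<alpha> \<and> Card_order \<beta> \<and> (\<alpha>, \<beta>) \<in> ordLess \<and> (\<beta>, hdim smult_K UNIV) \<in> ordLeq \<and>
     lineable smult_K A \<alpha> \<and>
     (\<forall>W. module.subspace smult_K W \<and> W \<subseteq> A \<union> {0} \<and> (hdim smult_K W, \<alpha>) \<in> ordIso \<longrightarrow>
        (\<exists>W'. module.subspace smult_K W' \<and> closed W' \<and> (hdim smult_K W', \<beta>) \<in> ordIso \<and>
              W \<subseteq> W' \<and> W' \<subseteq> A \<union> {0}))"

definition infinite_dimensional :: "('k::field \<Rightarrow> 'a::ab_group_add \<Rightarrow> 'a) \<Rightarrow> 'a set \<Rightarrow> bool" where
  "infinite_dimensional smult_K W \<longleftrightarrow> \<not> (\<exists>B. finite B \<and> B \<subseteq> W \<and> module.span smult_K B = W)"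

definition pointwise_lineable :: "('k::field \<Rightarrow> 'a::ab_group_add \<Rightarrow> 'a) \<Rightarrow> 'a set \<Rightarrow> bool" where
  "pointwise_lineable smult_K A \<longleftrightarrow>
     (\<forall>x\<in>A. \<exists>W. module.subspace smult_K W \<and> infinite_dimensional smult_K W \<and> x \<in> W \<and> W \<subseteq> A \<union> {0})"

definition pointwise_spaceable :: "('k::field \<Rightarrow> 'a::{ab_group_add,topological_space} \<Rightarrow> 'a) \<Rightarrow> 'a set \<Rightarrow> bool" where
  "pointwise_spaceable smult_K A \<longleftrightarrow>
     (\<forall>x\<in>A. \<exists>W. module.subspace smult_K W \<and> closed W \<and> infinite_dimensional smult_K W \<and> x \<in> W \<and> W \<subseteq> A \<union> {0})"

end

theory Submission
  imports Defs
begin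

unbundle cardinal_syntax
no_notation Set_Algebras.elt_set_eq (infix \<open>=o\<close> 50)

text \<open>A subspace is invariant under all scalings, so a linear functional bounded on it must
  vanish there: every subspace inside \<open>A\<close> lies in the common kernel of the \<open>\<phi>\<^sub>i\<close>, whereas
  \<open>A\<close> also contains small multiples of any vector outside that kernel. Each kernel has
  codimension at most one, so the common kernel has finite codimension and, the space being
  infinite-dimensional, a Hamel basis of it is as large as one of the whole space. The common
  kernel is closed, hence it is itself the closed subspace of full dimension required for
  spaceability.\<close>

context vector_space
begin

lemma subspace_obtain_basis:
  assumes "subspace V"
  obtains B where "independent B" "span B = V"
proof -
  obtain B where "B \<subseteq> V" "independent B" "V \<subseteq> span B"
    using basis_exists[of V] by metis
  then show ?thesis
    using that span_subspace[OF _ _ assms] by blast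
qed

lemma hdim_ordIso_card_of_basis:
  assumes "independent B" "span B = V"
  shows "hdim scale V =o card_of B"
proof -
  let ?B' = "SOME B. hamel_basis scale V B"
  have "hamel_basis scale V B"
    using assms span_superset[of B] unfolding hamel_basis_def by auto
  then have "hamel_basis scale V ?B'"
    by (rule someI)
  then have "\<exists>f. bij_betw f ?B' B"
    using assms by (intro bij_if_span_eq_span_bases) (auto simp: hamel_basis_def)
  then show ?thesis
    unfolding hdim_def by (simp add: card_of_ordIso)
qed

lemma subspace_obtain_subspace_hdim:
  assumes V: "subspace V" and \<alpha>: "Card_order \<alpha>" "\<alpha> \<le>o hdim scale V"
  obtains W where "subspace W" "W \<subseteq> V" "hdim scale W =o \<alpha>"
proof -
  obtain B where B: "independent B" "span B = V"
    using subspace_obtain_basis[OF V] .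
  have "card_of (Field \<alpha>) \<le>o card_of B"
    using card_of_Field_ordIso[OF \<alpha>(1)] \<alpha>(2) hdim_ordIso_card_of_basis[OF B]
    by (meson ordIso_ordLeq_trans ordLeq_ordIso_trans)
  then obtain f where f: "inj_on f (Field \<alpha>)" "f ` Field \<alpha> \<subseteq> B"
    by (metis card_of_ordLeq)
  have "independent (f ` Field \<alpha>)"
    using independent_mono[OF B(1) f(2)] .
  then have "hdim scale (span (f ` Field \<alpha>)) =o card_of (f ` Field \<alpha>)"
    by (rule hdim_ordIso_card_of_basis) simp
  also have "card_of (f ` Field \<alpha>) =o \<alpha>"
    using f(1) card_of_Field_ordIso[OF \<alpha>(1)]
    by (metis card_of_ordIso inj_on_imp_bij_betw ordIso_symmetric ordIso_transitive)
  finally show ?thesis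
    using that[of "span (f ` Field \<alpha>)"] span_mono[OF f(2)] B(2) by simp
qed

lemma hdim_ordIso_of_finite_codim:
  assumes K: "subspace K" and F: "finite F" and span_KF: "span (K \<union> F) = UNIV"
    and infdim: "infinite_dimensional scale UNIV"
  shows "hdim scale K =o hdim scale UNIV"
proof -
  obtain BK where BK: "independent BK" "span BK = K"
    using subspace_obtain_basis[OF K] .
  obtain B where B: "BK \<subseteq> B" "B \<subseteq> BK \<union> F" "independent B" "BK \<union> F \<subseteq> span B"
    using maximal_independent_subset_extend[of BK "BK \<union> F"] BK(1) by blast
  have "K \<union> F \<subseteq> span B"
    using B(4) span_minimal[of BK "span B"] BK(2) subspace_span by auto
  then have span_B: "span B = UNIV"
    using span_minimal[of "K \<union> F" "span B"] span_KF subspace_span by auto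
  have "infinite BK"
  proof
    assume "finite BK"
    then have "finite B"
      using B(2) F finite_subset by blast
    then show False
      using infdim span_B unfolding infinite_dimensional_def by blast
  qed
  then have "card_of (BK \<union> F) \<le>o card_of BK"
    using F by (intro card_of_Un_ordLeq_infinite_Field)
      (simp_all add: Field_card_of card_of_card_order_on ordLeq3_finite_infinite
        card_of_refl ordIso_imp_ordLeq)
  then have "card_of BK =o card_of B"
    using B(1,2) by (meson card_of_mono1 ordIso_iff_ordLeq ordLeq_transitive)
  then show ?thesis
    using hdim_ordIso_card_of_basis[OF BK] hdim_ordIso_card_of_basis[OF B(3) span_B]
    by (meson ordIso_symmetric ordIso_transitive)
qed

lemma subset_span_insert_kernel:
  assumes V: "subspace V" and f: "Vector_Spaces.linear scale (*) f"
  obtains y where "V \<subseteq> span (insert y (V \<inter> {x. f x = 0}))"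
proof (cases "\<exists>y\<in>V. f y \<noteq> 0")
  case True
  then obtain y where y: "y \<in> V" "f y \<noteq> 0" by blast
  have f_diff: "f (a - b) = f a - f b" and f_scale: "f (scale c a) = c * f a" for a b c
    using f by (simp_all add: linear_iff_module_hom module_hom.diff module_hom.scale)
  have "v \<in> span (insert y (V \<inter> {x. f x = 0}))" if v: "v \<in> V" for v
  proof -
    let ?c = "f v / f y"
    have "v - scale ?c y \<in> V \<inter> {x. f x = 0}"
      using v y subspace_diff[OF V] subspace_scale[OF V] by (simp add: f_diff f_scale)
    then have "(v - scale ?c y) + scale ?c y \<in> span (insert y (V \<inter> {x. f x = 0}))"
      by (meson insertI1 insertI2 span_add span_base span_scale)
    then show ?thesis by simp
  qed
  then show ?thesis using that by blast
next
  case False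
  then have "V \<subseteq> span (insert 0 (V \<inter> {x. f x = 0}))"
    using span_superset[of "insert 0 (V \<inter> {x. f x = 0})"] by blast
  then show ?thesis by (rule that)
qed

lemma subspace_Inter_kernels:
  assumes "\<forall>i\<in>I. Vector_Spaces.linear scale (*) (f i)"
  shows "subspace (\<Inter>i\<in>I. {x. f i x = 0})"
proof (rule subspace_Int)
  show "subspace {x. f i x = 0}" if "i \<in> I" for i
    using assms that by (blast intro: module_hom.subspace_kernel module_hom_linearI)
qed

lemma finite_codim_Inter_kernels:
  assumes "finite I" "\<forall>i\<in>I. Vector_Spaces.linear scale (*) (f i)"
  shows "\<exists>F. finite F \<and> span ((\<Inter>i\<in>I. {x. f i x = 0}) \<union> F) = UNIV"
  using assms
proof (induction I rule: finite_induct)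
  case empty
  show ?case by (intro exI[of _ "{}"]) simp
next
  case (insert j I)
  let ?K = "\<Inter>i\<in>I. {x. f i x = 0}"
  have f_j: "Vector_Spaces.linear scale (*) (f j)" and f_I: "\<forall>i\<in>I. Vector_Spaces.linear scale (*) (f i)"
    using insert.prems by simp_all
  obtain F where F: "finite F" "span (?K \<union> F) = UNIV"
    using insert.IH[OF f_I] by blast
  have "subspace ?K"
    using f_I by (rule subspace_Inter_kernels)
  then obtain y where y: "?K \<subseteq> span (insert y (?K \<inter> {x. f j x = 0}))"
    using f_j by (rule subset_span_insert_kernel)
  define S where "S = (\<Inter>i\<in>insert j I. {x. f i x = 0}) \<union> insert y F"
  have "insert y (?K \<inter> {x. f j x = 0}) \<subseteq> S"
    unfolding S_def by auto
  then have "span (insert y (?K \<inter> {x. f j x = 0})) \<subseteq> span S"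
    by (rule span_mono)
  with y have "?K \<subseteq> span S"
    by (rule subset_trans)
  moreover have "F \<subseteq> span S"
    using span_superset[of S] unfolding S_def by blast
  ultimately have "span (?K \<union> F) \<subseteq> span S"
    by (intro span_minimal subspace_span) blast
  then have "span S = UNIV"
    using F(2) by blast
  then show ?case
    using F(1) unfolding S_def by blast
qed

lemma hdim_Inter_kernels_ordIso:
  assumes "finite I" "\<forall>i\<in>I. Vector_Spaces.linear scale (*) (f i)"
    and "infinite_dimensional scale UNIV"
  shows "hdim scale (\<Inter>i\<in>I. {x. f i x = 0}) =o hdim scale UNIV"
  using finite_codim_Inter_kernels[OF assms(1,2)] subspace_Inter_kernels[OF assms(2)] assms(3)
  by (blast intro: hdim_ordIso_of_finite_codim)

end

lemma spaceable_if_maximal_closed_subspace: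
  fixes scale :: "'k::field \<Rightarrow> 'a::{ab_group_add,topological_space} \<Rightarrow> 'a"
  assumes vs: "vector_space scale"
    and K: "module.subspace scale K" "closed K" "K \<subseteq> A \<union> {0}"
      "hdim scale K =o hdim scale UNIV"
    and maximal: "\<And>W. module.subspace scale W \<Longrightarrow> W \<subseteq> A \<union> {0} \<Longrightarrow> W \<subseteq> K"
    and \<alpha>: "Card_order \<alpha>" "\<alpha> <o hdim scale UNIV"
  shows "spaceable scale A \<alpha> (hdim scale UNIV)"
proof -
  interpret vector_space scale by (rule vs)
  have "\<alpha> \<le>o hdim scale K"
    using \<alpha>(2) K(4) by (meson ordIso_symmetric ordLess_imp_ordLeq ordLeq_ordIso_trans)
  then obtain W where "subspace W" "W \<subseteq> K" "hdim scale W =o \<alpha>"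
    using subspace_obtain_subspace_hdim[OF K(1) \<alpha>(1)] by blast
  then have "lineable scale A \<alpha>"
    unfolding lineable_def using K(3) by blast
  moreover have "Card_order (hdim scale UNIV)"
    unfolding hdim_def by (rule card_of_Card_order)
  ultimately show ?thesis
    unfolding spaceable_def using K maximal \<alpha> by (blast intro: ordLeq_refl)
qed

lemma subspace_subset_kernel_if_bounded:
  fixes scale :: "'k::real_normed_field \<Rightarrow> 'a::ab_group_add \<Rightarrow> 'a"
  assumes f: "Vector_Spaces.linear scale (*) f"
    and W: "module.subspace scale W" and bounded: "\<forall>w\<in>W. norm (f w) < \<epsilon>"
  shows "W \<subseteq> {x. f x = 0}"
proof
  interpret f: Vector_Spaces.linear scale "(*)" f by (rule f)
  fix w assume w: "w \<in> W"
  have "\<epsilon> > 0"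
    using bounded f.vs1.subspace_0[OF W] by fastforce
  show "w \<in> {x. f x = 0}"
  proof (rule ccontr)
    assume "w \<notin> {x. f x = 0}"
    then have "f (scale (of_real \<epsilon> / f w) w) = of_real \<epsilon>"
      by (simp add: f.scale)
    moreover have "scale (of_real \<epsilon> / f w) w \<in> W"
      using f.vs1.subspace_scale[OF W w] .
    ultimately show False
      using bounded \<open>\<epsilon> > 0\<close> by fastforce
  qed
qed

lemma subspace_subset_Inter_kernels_if_bounded:
  fixes scale :: "'k::real_normed_field \<Rightarrow> 'a::ab_group_add \<Rightarrow> 'a"
  assumes "\<forall>i\<in>I. Vector_Spaces.linear scale (*) (f i)"
    and "module.subspace scale W" "W \<subseteq> {x. \<forall>i\<in>I. norm (f i x) < \<epsilon>}"
  shows "W \<subseteq> (\<Inter>i\<in>I. {x. f i x = 0})"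
  using subspace_subset_kernel_if_bounded[of scale "f i" W \<epsilon> for i] assms by blast

lemma exists_small_vector_off_kernel:
  fixes scale :: "'k::real_normed_field \<Rightarrow> 'a::ab_group_add \<Rightarrow> 'a"
  assumes "finite I" "j \<in> I" and f: "\<forall>i\<in>I. Vector_Spaces.linear scale (*) (f i)"
    and y: "f j y \<noteq> 0" and \<epsilon>: "\<epsilon> > 0"
  shows "\<exists>x. (\<forall>i\<in>I. norm (f i x) < \<epsilon>) \<and> f j x \<noteq> 0"
proof -
  define S where "S = (\<Sum>i\<in>I. norm (f i y))"
  define t where "t = \<epsilon> / (1 + S)"
  have "S \<ge> 0" unfolding S_def by (simp add: sum_nonneg)
  then have t: "t > 0" "t * (1 + S) = \<epsilon>"
    using \<epsilon> by (simp_all add: t_def)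
  have hom: "f i (scale (of_real t) y) = of_real t * f i y" if "i \<in> I" for i
    using f that by (simp add: Vector_Spaces.linear_iff)
  have "norm (f i (scale (of_real t) y)) < \<epsilon>" if i: "i \<in> I" for i
  proof -
    have "norm (f i (scale (of_real t) y)) = t * norm (f i y)"
      using hom[OF i] t(1) by (simp add: norm_mult)
    also have "\<dots> \<le> t * S"
      unfolding S_def using t(1) i \<open>finite I\<close> by (intro mult_left_mono member_le_sum) auto
    also have "\<dots> < \<epsilon>"
      using t by (simp add: algebra_simps)
    finally show ?thesis .
  qed
  moreover have "f j (scale (of_real t) y) \<noteq> 0"
    using hom[OF \<open>j \<in> I\<close>] t(1) y by simp
  ultimately show ?thesis by blast
qed

theorem mainTheorem4:
  fixes smult_K :: "'k::real_normed_field \<Rightarrow> 'a::banach \<Rightarrow> 'a"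
    and \<phi> :: "nat \<Rightarrow> 'a \<Rightarrow> 'k" and \<epsilon> :: real and n :: nat and A :: "'a set"
  assumes K: "(\<exists>e::'k \<Rightarrow> real. bij e \<and> (\<forall>x y. e (x + y) = e x + e y \<and> e (x * y) = e x * e y)
                \<and> (\<forall>x. norm (e x) = norm x))
            \<or> (\<exists>e::'k \<Rightarrow> complex. bij e \<and> (\<forall>x y. e (x + y) = e x + e y \<and> e (x * y) = e x * e y)
                \<and> (\<forall>x. norm (e x) = norm x))"
    and X: "K_banach smult_K"
    and infdim: "infinite_dimensional smult_K UNIV"
    and eps: "\<epsilon> > 0"
    and n: "n \<ge> 1"
    and lin: "\<forall>i\<in>{1..n}. Vector_Spaces.linear smult_K (*) (\<phi> i)"
    and cont: "\<forall>i\<in>{1..n}. continuous_on UNIV (\<phi> i)"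
    and nz: "\<forall>i\<in>{1..n}. \<phi> i \<noteq> (\<lambda>x. 0)"
    and A_def: "A = {x. \<forall>i\<in>{1..n}. norm (\<phi> i x) < \<epsilon>}"
  shows
    "((hdim smult_K (\<Inter>i\<in>{1..n}. {x. \<phi> i x = 0}), hdim smult_K UNIV) \<in> ordIso
      \<and> (\<forall>W. module.subspace smult_K W \<and> W \<subseteq> A \<and> (hdim smult_K W, hdim smult_K UNIV) \<in> ordLess
             \<longrightarrow> W \<subseteq> (\<Inter>i\<in>{1..n}. {x. \<phi> i x = 0}))
      \<and> (\<forall>\<alpha>::'c rel. Card_order \<alpha> \<and> (\<alpha>, hdim smult_K UNIV) \<in> ordLess
             \<longrightarrow> spaceable smult_K A \<alpha> (hdim smult_K UNIV)))
     \<and> ((\<exists>x\<in>A. \<not> (\<exists>W. module.subspace smult_K W \<and> x \<in> W \<and> W \<subseteq> A \<union> {0}))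
      \<and> \<not> pointwise_lineable smult_K A \<and> \<not> pointwise_spaceable smult_K A)"
proof -
  interpret vector_space smult_K
    using X by (simp add: K_banach_def)
  define Ker where "Ker = (\<Inter>i\<in>{1..n}. {x. \<phi> i x = 0})"
  have A_0: "A \<union> {0} = A"
    using eps lin by (auto simp: A_def linear_iff_module_hom module_hom.zero)
  have Ker_A: "Ker \<subseteq> A"
    using eps by (auto simp: Ker_def A_def)
  have Ker_subspace: "subspace Ker"
    unfolding Ker_def using lin by (rule subspace_Inter_kernels)
  have Ker_closed: "closed Ker"
    using cont by (auto simp: Ker_def intro!: closed_Collect_eq)
  have Ker_maximal: "W \<subseteq> Ker" if "subspace W" "W \<subseteq> A \<union> {0}" for W
    using subspace_subset_Inter_kernels_if_bounded[OF lin, of W \<epsilon>] that A_0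
    unfolding Ker_def A_def by blast
  have Ker_dim: "hdim smult_K Ker =o hdim smult_K UNIV"
    unfolding Ker_def using lin infdim by (intro hdim_Inter_kernels_ordIso) simp_all
  obtain y where "\<phi> 1 y \<noteq> 0"
    using nz n by fastforce
  then obtain x where x: "x \<in> A" "\<phi> 1 x \<noteq> 0"
    using exists_small_vector_off_kernel[of "{1..n}" 1 smult_K \<phi> y \<epsilon>] n lin eps
    unfolding A_def by auto
  then have no_subspace: "\<not> (\<exists>W. subspace W \<and> x \<in> W \<and> W \<subseteq> A \<union> {0})"
    using Ker_maximal n unfolding Ker_def by fastforce
  have "spaceable smult_K A \<alpha> (hdim smult_K UNIV)"
    if "Card_order \<alpha>" "\<alpha> <o hdim smult_K UNIV" for \<alpha> :: "'c rel"
    using spaceable_if_maximal_closed_subspace[OF vector_space_axioms Ker_subspace Ker_closed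
        _ Ker_dim Ker_maximal that] Ker_A by blast
  moreover have "\<not> pointwise_lineable smult_K A" "\<not> pointwise_spaceable smult_K A"
    unfolding pointwise_lineable_def pointwise_spaceable_def using x(1) no_subspace by blast+
  ultimately show ?thesis
    using Ker_dim Ker_maximal A_0 x(1) no_subspace unfolding Ker_def by blast
qed

end
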